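(* Let $d\ge 3$ and $h\ge 1$. The order of the sandpile group $G(d,h)$ is $$|G(d,h)| = d(d-1)^h\,[\theta(d,h+1)]^{d-1}\prod_{n=1}^{h-1}[\theta(d,h+1-n)]^{(d-2)d(d-1)^{n-1}},$$ where $\theta(d,n) := \frac{(d-1)^n-1}{d-2}$.
   Context: Let $\mathcal{T}(d,h)$ be the rooted tree in which the root $0$ has $d$ children, every vertex at distance $1,\dots,h-1$ from the root has $d-1$ children, and the vertices at distance $h$ are leaves. Let $V$ be its vertex set, $A$ its adjacency matrix, $\Delta := dI-A$, and $\Lambda\subset\mathbb{Z}^V$ the lattice spanned by the rows of $\Delta$. Then $G(d,h):=\mathbb{Z}^V/\Lambda$. *)

theory Defs
  imports Complex_Main "HOL-Algebra.Free_Abelian_Groups" "HOL-Algebra.Coset" "HOL-Algebra.Generated_Groups"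
begin

text \<open>Vertices of T(d,h) are encoded as paths from the root: the root is the empty list,
  the children of the root are [i] with i < d, and the children of a vertex xs with
  1 \<le> length xs < h are xs @ [i] with i < d - 1.\<close>

definition tree_verts :: "nat \<Rightarrow> nat \<Rightarrow> nat list set" where
  "tree_verts d h = {xs. length xs \<le> h \<and>
      (\<forall>j < length xs. xs ! j < (if j = 0 then d else d - 1))}"

definition tree_adj :: "nat list \<Rightarrow> nat list \<Rightarrow> bool" where
  "tree_adj u v \<longleftrightarrow> (\<exists>i. v = u @ [i]) \<or> (\<exists>i. u = v @ [i])"

definition delta_row :: "nat \<Rightarrow> nat \<Rightarrow> nat list \<Rightarrow> (nat list \<Rightarrow>\<^sub>0 int)" where
  "delta_row d h u = frag_cmul (int d) (frag_of u)
      - (\<Sum>v \<in> {v \<in> tree_verts d h. tree_adj u v}. frag_of v)"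

definition delta_lattice :: "nat \<Rightarrow> nat \<Rightarrow> (nat list \<Rightarrow>\<^sub>0 int) set" where
  "delta_lattice d h = generate (free_Abelian_group (tree_verts d h))
      (delta_row d h ` tree_verts d h)"

definition sandpile_group :: "nat \<Rightarrow> nat \<Rightarrow> (nat list \<Rightarrow>\<^sub>0 int) set monoid" where
  "sandpile_group d h = free_Abelian_group (tree_verts d h) Mod delta_lattice d h"

definition theta :: "nat \<Rightarrow> nat \<Rightarrow> real" where
  "theta d n = ((real d - 1) ^ n - 1) / (real d - 2)"

end

theory Submission
  imports Defs "HOL-Library.Sublist"
begin

(* Let U be the matrix whose row v has the entry theta(h + 1 - |w|) at every descendant w of v
   (v included). Since theta(n + 2) = d theta(n + 1) - (d - 1) theta(n) and theta(2) = d, row v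
   of U Delta is supported on v and its parent, with diagonal entry theta(h + 2 - |v|), and
   d (d - 1)^h at the root. A lattice spanned by rows that are triangular with respect to some
   ranking of V has index the product of the diagonal entries; as Delta is injective,
   [Z^V : Z^V U Delta] = [Z^V : Z^V Delta] [Z^V : Z^V U] = |G| [Z^V : Z^V U], whence
   |G| = d (d - 1)^h prod_(v non-root) theta(h + 2 - |v|) / prod_v theta(h + 1 - |v|).
   Grouping the numerator by parents leaves every vertex with exponent (number of children - 1),
   which depends only on its depth; counting the vertices of each depth gives the formula. *)

definition add_subgroup :: "'g::ab_group_add set \<Rightarrow> bool" where
  "add_subgroup B \<longleftrightarrow> 0 \<in> B \<and> (\<forall>x\<in>B. \<forall>y\<in>B. x - y \<in> B)"

definition add_cosets :: "'g::ab_group_add set \<Rightarrow> 'g set \<Rightarrow> 'g set set" where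
  "add_cosets A B = (\<lambda>a. (\<lambda>b. b + a) ` B) ` A"

definition add_index :: "'g::ab_group_add set \<Rightarrow> 'g set \<Rightarrow> nat" where
  "add_index A B = card (add_cosets A B)"

definition transversal :: "'g::ab_group_add set \<Rightarrow> 'g set \<Rightarrow> 'g set \<Rightarrow> bool" where
  "transversal A B R \<longleftrightarrow> R \<subseteq> A \<and> (\<forall>a\<in>A. \<exists>!r. r \<in> R \<and> a - r \<in> B)"

lemma add_subgroup_zero: "add_subgroup B \<Longrightarrow> 0 \<in> B"
  by (simp add: add_subgroup_def)

lemma add_subgroup_diff: "add_subgroup B \<Longrightarrow> x \<in> B \<Longrightarrow> y \<in> B \<Longrightarrow> x - y \<in> B"
  by (simp add: add_subgroup_def)

lemma add_subgroup_uminus: "add_subgroup B \<Longrightarrow> x \<in> B \<Longrightarrow> - x \<in> B"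
  using add_subgroup_diff[of B 0 x] add_subgroup_zero by auto

lemma add_subgroup_add: "add_subgroup B \<Longrightarrow> x \<in> B \<Longrightarrow> y \<in> B \<Longrightarrow> x + y \<in> B"
  using add_subgroup_diff[of B x "- y"] add_subgroup_uminus[of B y] by auto

lemma add_subgroup_image:
  assumes "\<And>x y. f (x + y) = f x + f y" and "add_subgroup B"
  shows "add_subgroup (f ` B)"
proof -
  have "f (x - y) = f x - f y" for x y
    using assms(1)[of "x - y" y] by (simp add: algebra_simps)
  moreover have "f 0 = 0"
    using assms(1)[of 0 0] by simp
  ultimately show ?thesis
    using assms(2) unfolding add_subgroup_def by (metis image_iff)
qed

lemma add_coset_eq_iff:
  assumes "add_subgroup B"
  shows "(\<lambda>b. b + a) ` B = (\<lambda>b. b + a') ` B \<longleftrightarrow> a - a' \<in> B"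
proof
  assume "(\<lambda>b. b + a) ` B = (\<lambda>b. b + a') ` B"
  moreover have "a \<in> (\<lambda>b. b + a) ` B"
    using add_subgroup_zero[OF assms] by force
  ultimately obtain b where "b \<in> B" "a = b + a'" by auto
  then show "a - a' \<in> B" by simp
next
  assume aa': "a - a' \<in> B"
  have "b + a \<in> (\<lambda>b. b + a') ` B" if "b \<in> B" for b
    using add_subgroup_add[OF assms that aa'] by (force simp: algebra_simps)
  moreover have "b + a' \<in> (\<lambda>b. b + a) ` B" if "b \<in> B" for b
    using add_subgroup_diff[OF assms that aa'] by (force simp: algebra_simps)
  ultimately show "(\<lambda>b. b + a) ` B = (\<lambda>b. b + a') ` B" by blast
qed

lemma card_transversal:
  assumes "add_subgroup B" and R: "transversal A B R"
  shows "card R = add_index A B"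
  unfolding add_index_def
proof (rule bij_betw_same_card, rule bij_betwI')
  fix x y assume "x \<in> R" "y \<in> R"
  moreover from this have "\<exists>!r. r \<in> R \<and> x - r \<in> B"
    using R by (auto simp: transversal_def)
  ultimately show "((\<lambda>b. b + x) ` B = (\<lambda>b. b + y) ` B) = (x = y)"
    using add_coset_eq_iff[OF assms(1)] add_subgroup_zero[OF assms(1)] by force
next
  fix x assume "x \<in> R"
  then show "(\<lambda>b. b + x) ` B \<in> add_cosets A B"
    using R by (auto simp: transversal_def add_cosets_def)
next
  fix C assume "C \<in> add_cosets A B"
  then obtain a where a: "a \<in> A" "C = (\<lambda>b. b + a) ` B"
    by (auto simp: add_cosets_def)
  then obtain r where "r \<in> R" "a - r \<in> B"
    using R by (auto simp: transversal_def)
  then show "\<exists>r\<in>R. C = (\<lambda>b. b + r) ` B"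
    using a add_coset_eq_iff[OF assms(1)] by blast
qed

lemma transversal_exists:
  assumes "add_subgroup A" "add_subgroup B" "B \<subseteq> A"
  shows "\<exists>R. transversal A B R"
proof -
  define rep where "rep a = (SOME r. r \<in> (\<lambda>b. b + a) ` B)" for a
  have rep: "rep a - a \<in> B" for a
  proof -
    have "rep a \<in> (\<lambda>b. b + a) ` B"
      unfolding rep_def by (rule someI[of _ "0 + a"]) (use add_subgroup_zero[OF assms(2)] in blast)
    then show ?thesis by auto
  qed
  have rep_eq: "rep a = rep a'" if "a - a' \<in> B" for a a'
    using that add_coset_eq_iff[OF assms(2)] unfolding rep_def by metis
  have "transversal A B (rep ` A)"
    unfolding transversal_def
  proof (intro conjI ballI)
    show "rep ` A \<subseteq> A"
      using rep assms add_subgroup_add by (metis diff_add_cancel image_subset_iff subsetD)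
  next
    fix a assume "a \<in> A"
    show "\<exists>!r. r \<in> rep ` A \<and> a - r \<in> B"
    proof (rule ex1I[of _ "rep a"])
      show "rep a \<in> rep ` A \<and> a - rep a \<in> B"
        using \<open>a \<in> A\<close> rep add_subgroup_uminus[OF assms(2)] by force
    next
      fix r assume r: "r \<in> rep ` A \<and> a - r \<in> B"
      then obtain a' where "r = rep a'" by blast
      have "a - a' = (a - r) + (rep a' - a')"
        using \<open>r = rep a'\<close> by simp
      then have "a - a' \<in> B"
        using r rep[of a'] add_subgroup_add[OF assms(2)] by metis
      then show "r = rep a"
        using rep_eq \<open>r = rep a'\<close> by metis
    qed
  qed
  then show ?thesis by blast
qed

lemma transversal_sums:
  assumes A: "add_subgroup A" and B: "add_subgroup B" and "B \<subseteq> A" "C \<subseteq> B"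
    and R1: "transversal A B R1" and R2: "transversal B C R2"
  shows "transversal A C ((\<lambda>(x, y). x + y) ` (R1 \<times> R2))"
  unfolding transversal_def
proof (intro conjI ballI)
  have "R1 \<subseteq> A" "R2 \<subseteq> A"
    using R1 R2 \<open>B \<subseteq> A\<close> by (auto simp: transversal_def)
  then show "(\<lambda>(x, y). x + y) ` (R1 \<times> R2) \<subseteq> A"
    using add_subgroup_add[OF A] by auto
next
  fix a assume "a \<in> A"
  then obtain r where r: "r \<in> R1" "a - r \<in> B"
    using R1 by (auto simp: transversal_def)
  then obtain s where s: "s \<in> R2" "a - r - s \<in> C"
    using R2 by (auto simp: transversal_def)
  show "\<exists>!z. z \<in> (\<lambda>(x, y). x + y) ` (R1 \<times> R2) \<and> a - z \<in> C"
  proof (rule ex1I[of _ "r + s"])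
    show "r + s \<in> (\<lambda>(x, y). x + y) ` (R1 \<times> R2) \<and> a - (r + s) \<in> C"
      using r s by (auto simp: algebra_simps)
  next
    fix z assume "z \<in> (\<lambda>(x, y). x + y) ` (R1 \<times> R2) \<and> a - z \<in> C"
    then obtain x y where z: "x \<in> R1" "y \<in> R2" "z = x + y" "a - z \<in> C"
      by auto
    have "y \<in> B"
      using z R2 by (auto simp: transversal_def)
    then have "a - x \<in> B"
      using add_subgroup_add[OF B, of "a - z" y] z \<open>C \<subseteq> B\<close> by auto
    then have "x = r"
      using R1 r z \<open>a \<in> A\<close> unfolding transversal_def by blast
    then have "a - r \<in> B" "(a - r) - y \<in> C"
      using r z by (auto simp: algebra_simps)
    then have "y = s"
      using R2 s z(2) unfolding transversal_def by blast
    with \<open>x = r\<close> show "z = r + s"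
      using z by simp
  qed
qed

lemma add_index_mult:
  assumes A: "add_subgroup A" and B: "add_subgroup B" and C: "add_subgroup C"
    and "B \<subseteq> A" "C \<subseteq> B"
  shows "add_index A C = add_index A B * add_index B C"
proof -
  obtain R1 where R1: "transversal A B R1"
    using transversal_exists[OF A B \<open>B \<subseteq> A\<close>] by blast
  obtain R2 where R2: "transversal B C R2"
    using transversal_exists[OF B C \<open>C \<subseteq> B\<close>] by blast
  have "inj_on (\<lambda>(x, y). x + y) (R1 \<times> R2)"
  proof (rule inj_onI, clarify)
    fix x y x' y' assume xy: "x \<in> R1" "y \<in> R2" "x' \<in> R1" "y' \<in> R2" "x + y = x' + y'"
    have "x - x' = y' - y"
      using xy(5) by (simp add: algebra_simps)
    moreover have "y \<in> B" "y' \<in> B"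
      using xy(2,4) R2 by (auto simp: transversal_def)
    ultimately have "x - x' \<in> B"
      using add_subgroup_diff[OF B] by metis
    moreover have "x - x \<in> B"
      using add_subgroup_zero[OF B] by simp
    moreover have "x \<in> A"
      using xy(1) R1 by (auto simp: transversal_def)
    ultimately have "x = x'"
      using R1 xy(1,3) unfolding transversal_def by blast
    then show "x = x' \<and> y = y'"
      using xy(5) by simp
  qed
  then have "card ((\<lambda>(x, y). x + y) ` (R1 \<times> R2)) = card R1 * card R2"
    by (simp add: card_image card_cartesian_product)
  moreover have "transversal A C ((\<lambda>(x, y). x + y) ` (R1 \<times> R2))"
    using transversal_sums[OF A B \<open>B \<subseteq> A\<close> \<open>C \<subseteq> B\<close> R1 R2] .
  ultimately show ?thesis
    using card_transversal[OF B R1] card_transversal[OF C R2] card_transversal[OF C] by metis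
qed

lemma add_index_image:
  assumes hom: "\<And>x y. f (x + y) = f x + f y" and "inj_on f A"
    and "add_subgroup A" "add_subgroup C" "C \<subseteq> A"
  shows "add_index (f ` A) (f ` C) = add_index A C"
proof -
  obtain R where R: "transversal A C R"
    using transversal_exists[OF assms(3,4,5)] by blast
  have f_diff: "f (x - y) = f x - f y" for x y
    using hom[of "x - y" y] by (simp add: algebra_simps)
  have "transversal (f ` A) (f ` C) (f ` R)"
    unfolding transversal_def
  proof (intro conjI ballI)
    show "f ` R \<subseteq> f ` A"
      using R by (auto simp: transversal_def)
  next
    fix fa assume "fa \<in> f ` A"
    then obtain a where a: "a \<in> A" "fa = f a" by blast
    obtain r where r: "r \<in> R" "a - r \<in> C"
      using R a by (auto simp: transversal_def)
    show "\<exists>!z. z \<in> f ` R \<and> fa - z \<in> f ` C"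
    proof (rule ex1I[of _ "f r"])
      show "f r \<in> f ` R \<and> fa - f r \<in> f ` C"
        using r a f_diff by (metis image_eqI)
    next
      fix z assume "z \<in> f ` R \<and> fa - z \<in> f ` C"
      then obtain s c where s: "s \<in> R" "z = f s" "c \<in> C" "f (a - s) = f c"
        using a f_diff by auto
      moreover have "a - s \<in> A"
        using s R a add_subgroup_diff[OF assms(3)] by (auto simp: transversal_def)
      ultimately have "a - s \<in> C"
        using \<open>inj_on f A\<close> \<open>C \<subseteq> A\<close> by (metis inj_onD subsetD)
      then show "z = f r"
        using R r s a unfolding transversal_def by blast
    qed
  qed
  moreover have "card (f ` R) = card R"
    using R \<open>inj_on f A\<close> by (auto simp: transversal_def intro: card_image inj_on_subset)
  ultimately show ?thesis
    using card_transversal[OF assms(4) R] card_transversal[OF add_subgroup_image[OF hom assms(4)]]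
    by metis
qed

lemma sum_eq_single:
  assumes "finite A" "a \<in> A" "\<And>x. x \<in> A \<Longrightarrow> x \<noteq> a \<Longrightarrow> f x = 0"
  shows "sum f A = f a"
  using assms by (simp add: sum.remove sum.neutral)

abbreviation frags_on :: "'a set \<Rightarrow> ('a \<Rightarrow>\<^sub>0 int) set" where
  "frags_on V \<equiv> carrier (free_Abelian_group V)"

definition int_span :: "'a set \<Rightarrow> ('a \<Rightarrow> 'b \<Rightarrow>\<^sub>0 int) \<Rightarrow> ('b \<Rightarrow>\<^sub>0 int) set" where
  "int_span V g = frag_extend g ` frags_on V"

lemma add_subgroup_frags_on: "add_subgroup (frags_on V)"
  unfolding add_subgroup_def by (auto intro!: order_trans[OF keys_diff])

lemma add_subgroup_int_span: "add_subgroup (int_span V g)"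
  unfolding add_subgroup_def int_span_def
proof (intro conjI ballI)
  show "0 \<in> frag_extend g ` frags_on V"
    by (rule image_eqI[of _ _ 0]) auto
next
  fix x y assume "x \<in> frag_extend g ` frags_on V" "y \<in> frag_extend g ` frags_on V"
  then obtain a b where "a \<in> frags_on V" "b \<in> frags_on V" "x = frag_extend g a" "y = frag_extend g b"
    by blast
  then show "x - y \<in> frag_extend g ` frags_on V"
    using add_subgroup_diff[OF add_subgroup_frags_on]
    by (intro image_eqI[of _ _ "a - b"]) (simp_all add: frag_extend_diff)
qed

lemma frag_extend_in_frags_on:
  "g ` V \<subseteq> frags_on W \<Longrightarrow> c \<in> frags_on V \<Longrightarrow> frag_extend g c \<in> frags_on W"
  by (fastforce dest!: subsetD[OF keys_frag_extend])

lemma int_span_subset: "g ` V \<subseteq> frags_on W \<Longrightarrow> int_span V g \<subseteq> frags_on W"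
  unfolding int_span_def using frag_extend_in_frags_on by blast

lemma frag_extend_eq_sum:
  assumes "finite V" "c \<in> frags_on V"
  shows "frag_extend g c = (\<Sum>v\<in>V. frag_cmul (poly_mapping.lookup c v) (g v))"
  unfolding frag_extend_def
  by (rule sum.mono_neutral_left) (use assms in \<open>auto simp: in_keys_iff\<close>)

lemma lookup_frag_extend:
  assumes "finite V" "c \<in> frags_on V"
  shows "poly_mapping.lookup (frag_extend g c) w =
    (\<Sum>v\<in>V. poly_mapping.lookup c v * poly_mapping.lookup (g v) w)"
  using frag_extend_eq_sum[OF assms, of g] by (simp add: lookup_sum)

lemma frag_extend_frag_extend: "frag_extend f (frag_extend g c) = frag_extend (frag_extend f \<circ> g) c"
  using subset_UNIV by (induction c rule: frag_induction) (auto simp: frag_extend_diff)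

lemma subgroup_free_Abelian_group_iff:
  assumes "B \<subseteq> frags_on V"
  shows "subgroup B (free_Abelian_group V) \<longleftrightarrow> add_subgroup B"
proof
  assume "subgroup B (free_Abelian_group V)"
  then interpret subgroup B "free_Abelian_group V" .
  have "x - y \<in> B" if "x \<in> B" "y \<in> B" for x y
  proof -
    have "inv\<^bsub>free_Abelian_group V\<^esub> y = - y"
      using that(2) assms by (simp add: subset_iff)
    then show ?thesis
      using m_closed[OF that(1) m_inv_closed[OF that(2)]] by simp
  qed
  then show "add_subgroup B"
    using one_closed by (simp add: add_subgroup_def)
next
  assume B: "add_subgroup B"
  show "subgroup B (free_Abelian_group V)"
  proof (rule group.subgroupI[OF group_free_Abelian_group assms])
    show "B \<noteq> {}"
      using add_subgroup_zero[OF B] by blast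
  next
    fix a assume "a \<in> B"
    moreover from this have "inv\<^bsub>free_Abelian_group V\<^esub> a = - a"
      using assms by (simp add: subset_iff)
    ultimately show "inv\<^bsub>free_Abelian_group V\<^esub> a \<in> B"
      using add_subgroup_uminus[OF B] by simp
  next
    fix a b assume "a \<in> B" "b \<in> B"
    then show "a \<otimes>\<^bsub>free_Abelian_group V\<^esub> b \<in> B"
      using add_subgroup_add[OF B] by simp
  qed
qed

lemma generate_free_Abelian_group:
  assumes g: "g ` V \<subseteq> frags_on V"
  shows "generate (free_Abelian_group V) (g ` V) = int_span V g"
proof
  have "g v \<in> int_span V g" if "v \<in> V" for v
    unfolding int_span_def using that by (intro image_eqI[of _ _ "frag_of v"]) simp_all
  then have "g ` V \<subseteq> int_span V g"
    by blast
  moreover have "subgroup (int_span V g) (free_Abelian_group V)"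
    using subgroup_free_Abelian_group_iff[OF int_span_subset[OF g]] add_subgroup_int_span by simp
  ultimately show "generate (free_Abelian_group V) (g ` V) \<subseteq> int_span V g"
    by (rule group.generate_subgroup_incl[OF group_free_Abelian_group])
next
  let ?H = "generate (free_Abelian_group V) (g ` V)"
  have "subgroup ?H (free_Abelian_group V)"
    using g by (simp add: group.generate_is_subgroup)
  moreover have "?H \<subseteq> frags_on V"
    using group.generate_in_carrier[OF group_free_Abelian_group g] by blast
  ultimately have H: "add_subgroup ?H"
    using subgroup_free_Abelian_group_iff[of ?H V] by simp
  show "int_span V g \<subseteq> ?H"
  proof
    fix x assume "x \<in> int_span V g"
    then obtain c where "Poly_Mapping.keys c \<subseteq> V" "x = frag_extend g c"
      by (auto simp: int_span_def)
    moreover have "frag_extend g c \<in> ?H" if "Poly_Mapping.keys c \<subseteq> V"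
      by (rule free_Abelian_group_induct[where P = "\<lambda>c. frag_extend g c \<in> ?H", OF that])
        (simp_all add: frag_extend_diff add_subgroup_zero[OF H] add_subgroup_diff[OF H] generate.incl)
    ultimately show "x \<in> ?H"
      by blast
  qed
qed

lemma order_free_Abelian_group_Mod:
  "order (free_Abelian_group V Mod H) = add_index (frags_on V) H"
proof -
  have "H #>\<^bsub>free_Abelian_group V\<^esub> a = (\<lambda>b. b + a) ` H" for a
    unfolding r_coset_def by auto
  then have "rcosets\<^bsub>free_Abelian_group V\<^esub> H = add_cosets (frags_on V) H"
    unfolding RCOSETS_def add_cosets_def by auto
  then show ?thesis
    by (simp add: order_def FactGroup_def add_index_def)
qed

definition box :: "'a set \<Rightarrow> ('a \<Rightarrow> int) \<Rightarrow> ('a \<Rightarrow>\<^sub>0 int) set" where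
  "box V a = {x \<in> frags_on V. \<forall>v\<in>V. 0 \<le> poly_mapping.lookup x v \<and> poly_mapping.lookup x v < a v}"

lemma card_box:
  assumes "finite V"
  shows "card (box V a) = (\<Prod>v\<in>V. nat (a v))"
proof -
  have "bij_betw (\<lambda>x. restrict (poly_mapping.lookup x) V) (box V a) (\<Pi>\<^sub>E v\<in>V. {0..<a v})"
  proof (rule bij_betwI')
    fix x y assume "x \<in> box V a" "y \<in> box V a"
    then have "Poly_Mapping.keys x \<subseteq> V" "Poly_Mapping.keys y \<subseteq> V"
      by (auto simp: box_def)
    then show "(restrict (poly_mapping.lookup x) V = restrict (poly_mapping.lookup y) V) = (x = y)"
      by (metis in_keys_iff poly_mapping_eqI restrict_apply' subsetD)
  next
    fix x assume "x \<in> box V a"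
    then show "restrict (poly_mapping.lookup x) V \<in> (\<Pi>\<^sub>E v\<in>V. {0..<a v})"
      by (auto simp: box_def)
  next
    fix f assume f: "f \<in> (\<Pi>\<^sub>E v\<in>V. {0..<a v})"
    define x where "x = Abs_poly_mapping (\<lambda>v. if v \<in> V then f v else 0)"
    have "finite {v. (if v \<in> V then f v else 0) \<noteq> 0}"
      using assms by (rule finite_subset[rotated]) auto
    then have lookup_x: "poly_mapping.lookup x = (\<lambda>v. if v \<in> V then f v else 0)"
      by (simp add: x_def)
    show "\<exists>x\<in>box V a. f = restrict (poly_mapping.lookup x) V"
    proof
      show "f = restrict (poly_mapping.lookup x) V"
        using f by (auto simp: lookup_x PiE_def extensional_def)
      show "x \<in> box V a"
        using f by (auto simp: box_def lookup_x in_keys_iff)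
    qed
  qed
  then show ?thesis
    using assms by (simp add: bij_betw_same_card card_PiE)
qed

locale triangular_family =
  fixes V :: "'a set" and g :: "'a \<Rightarrow> 'a \<Rightarrow>\<^sub>0 int" and rk :: "'a \<Rightarrow> nat"
  assumes finite_V: "finite V"
    and g_frags_on: "g ` V \<subseteq> frags_on V"
    and diag_pos: "v \<in> V \<Longrightarrow> poly_mapping.lookup (g v) v > 0"
    and triangular: "v \<in> V \<Longrightarrow> poly_mapping.lookup (g v) w \<noteq> 0 \<Longrightarrow> w \<noteq> v \<Longrightarrow> rk v < rk w"
begin

abbreviation diag :: "'a \<Rightarrow> int" where
  "diag v \<equiv> poly_mapping.lookup (g v) v"

lemma lookup_frag_extend_lowest:
  assumes c: "c \<in> frags_on V" and v: "v \<in> V"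
    and lowest: "\<And>w. poly_mapping.lookup c w \<noteq> 0 \<Longrightarrow> rk v \<le> rk w"
  shows "poly_mapping.lookup (frag_extend g c) v = poly_mapping.lookup c v * diag v"
proof -
  have "poly_mapping.lookup (frag_extend g c) v =
      (\<Sum>w\<in>V. poly_mapping.lookup c w * poly_mapping.lookup (g w) v)"
    by (rule lookup_frag_extend[OF finite_V c])
  also have "\<dots> = poly_mapping.lookup c v * diag v"
  proof (rule sum_eq_single[OF finite_V v])
    fix w assume "w \<in> V" "w \<noteq> v"
    then show "poly_mapping.lookup c w * poly_mapping.lookup (g w) v = 0"
      using lowest[of w] triangular[of w v] by fastforce
  qed
  finally show ?thesis .
qed

lemma box_eq_if_diff_in_int_span:
  assumes "x \<in> box V diag" "y \<in> box V diag" "x - y \<in> int_span V g"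
  shows "x = y"
proof (rule ccontr)
  assume "x \<noteq> y"
  obtain c where c: "c \<in> frags_on V" "x - y = frag_extend g c"
    using assms(3) by (auto simp: int_span_def)
  with \<open>x \<noteq> y\<close> have "Poly_Mapping.keys c \<noteq> {}"
    by auto
  then obtain v where v: "v \<in> Poly_Mapping.keys c" and lowest: "\<And>w. w \<in> Poly_Mapping.keys c \<Longrightarrow> \<not> rk w < rk v"
    using ex_is_arg_min_if_finite[of "Poly_Mapping.keys c" rk] by (auto simp: is_arg_min_def)
  have "v \<in> V"
    using v c(1) by auto
  have "poly_mapping.lookup (x - y) v = poly_mapping.lookup c v * diag v"
    unfolding c(2) using lookup_frag_extend_lowest[OF c(1) \<open>v \<in> V\<close>] lowest
    by (simp add: in_keys_iff not_less)
  then have "poly_mapping.lookup x v - poly_mapping.lookup y v = poly_mapping.lookup c v * diag v"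
    by (simp add: lookup_minus)
  moreover have "\<bar>poly_mapping.lookup x v - poly_mapping.lookup y v\<bar> < diag v"
  proof -
    have "0 \<le> poly_mapping.lookup x v" "poly_mapping.lookup x v < diag v"
      "0 \<le> poly_mapping.lookup y v" "poly_mapping.lookup y v < diag v"
      using assms(1,2) \<open>v \<in> V\<close> by (auto simp: box_def)
    then show ?thesis
      by linarith
  qed
  moreover have "poly_mapping.lookup c v \<noteq> 0"
    using v by (simp add: in_keys_iff)
  ultimately show False
    using diag_pos[OF \<open>v \<in> V\<close>] by (auto simp: abs_mult dest: mult_right_mono[of 1 _ "diag v"])
qed

text \<open>Subtracting multiples of the generators of rank \<open>n\<close> reduces the coordinates of rank \<open>n\<close>
  modulo the diagonal and, by triangularity, leaves those of smaller rank alone.\<close>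

lemma reduce_at_rank:
  obtains q where "q \<in> frags_on V"
    and "\<And>v. v \<in> V \<Longrightarrow> rk v < n \<Longrightarrow> poly_mapping.lookup (frag_extend g q) v = 0"
    and "\<And>v. v \<in> V \<Longrightarrow> rk v = n \<Longrightarrow>
      poly_mapping.lookup (y - frag_extend g q) v = poly_mapping.lookup y v mod diag v"
proof -
  define W where "W = {w \<in> V. rk w = n}"
  define q where "q = (\<Sum>w\<in>W. frag_cmul (poly_mapping.lookup y w div diag w) (frag_of w))"
  have "W \<subseteq> V" "finite W"
    using finite_V by (auto simp: W_def)
  have lookup_q: "poly_mapping.lookup (frag_extend g q) v =
      (\<Sum>w\<in>W. (poly_mapping.lookup y w div diag w) * poly_mapping.lookup (g w) v)" for v
    by (simp add: q_def frag_extend_sum[OF \<open>finite W\<close>] frag_extend_cmul lookup_sum)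
  show ?thesis
  proof (rule that)
    show "q \<in> frags_on V"
      unfolding q_def using \<open>W \<subseteq> V\<close>
      by (intro sum_closed_free_Abelian_group) (auto dest: subsetD[OF keys_cmul])
  next
    fix v assume "v \<in> V" "rk v < n"
    then show "poly_mapping.lookup (frag_extend g q) v = 0"
      unfolding lookup_q using triangular by (force simp: W_def intro: sum.neutral)
  next
    fix v assume "v \<in> V" "rk v = n"
    then have "v \<in> W"
      by (simp add: W_def)
    have "poly_mapping.lookup (frag_extend g q) v = (poly_mapping.lookup y v div diag v) * diag v"
      unfolding lookup_q using triangular \<open>rk v = n\<close>
      by (intro sum_eq_single[OF \<open>finite W\<close> \<open>v \<in> W\<close>]) (force simp: W_def)
    then show "poly_mapping.lookup (y - frag_extend g q) v = poly_mapping.lookup y v mod diag v"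
      by (simp add: lookup_minus minus_div_mult_eq_mod)
  qed
qed

lemma ex_reduced_below_rank:
  assumes "x \<in> frags_on V"
  shows "\<exists>c\<in>frags_on V. \<forall>v\<in>V. rk v < n \<longrightarrow>
    0 \<le> poly_mapping.lookup (x - frag_extend g c) v \<and> poly_mapping.lookup (x - frag_extend g c) v < diag v"
proof (induction n)
  case 0
  show ?case by (intro bexI[of _ 0]) auto
next
  case (Suc n)
  then obtain c where c: "c \<in> frags_on V" and reduced: "\<forall>v\<in>V. rk v < n \<longrightarrow>
    0 \<le> poly_mapping.lookup (x - frag_extend g c) v \<and> poly_mapping.lookup (x - frag_extend g c) v < diag v"
    by blast
  obtain q where q: "q \<in> frags_on V"
    and below: "\<And>v. v \<in> V \<Longrightarrow> rk v < n \<Longrightarrow> poly_mapping.lookup (frag_extend g q) v = 0"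
    and at: "\<And>v. v \<in> V \<Longrightarrow> rk v = n \<Longrightarrow> poly_mapping.lookup (x - frag_extend g c - frag_extend g q) v =
      poly_mapping.lookup (x - frag_extend g c) v mod diag v"
    using reduce_at_rank[where n = n and y = "x - frag_extend g c"] by blast
  have eq: "x - frag_extend g (c + q) = x - frag_extend g c - frag_extend g q"
    by (simp add: frag_extend_add)
  have "0 \<le> poly_mapping.lookup (x - frag_extend g c - frag_extend g q) v \<and>
      poly_mapping.lookup (x - frag_extend g c - frag_extend g q) v < diag v"
    if "v \<in> V" "rk v < Suc n" for v
  proof (cases "rk v = n")
    case True
    then show ?thesis
      using at that diag_pos[OF \<open>v \<in> V\<close>] by simp
  next
    case False
    then show ?thesis
      using below reduced that by (simp add: lookup_minus)
  qed
  then have "\<forall>v\<in>V. rk v < Suc n \<longrightarrow> 0 \<le> poly_mapping.lookup (x - frag_extend g (c + q)) v \<and>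
      poly_mapping.lookup (x - frag_extend g (c + q)) v < diag v"
    unfolding eq by blast
  then show ?case
    using add_subgroup_add[OF add_subgroup_frags_on c q] by blast
qed

lemma transversal_box: "transversal (frags_on V) (int_span V g) (box V diag)"
  unfolding transversal_def
proof (intro conjI ballI)
  show "box V diag \<subseteq> frags_on V"
    by (auto simp: box_def)
next
  fix x assume x: "x \<in> frags_on V"
  have "rk v < Suc (Max (rk ` V))" if "v \<in> V" for v
    using finite_V that by (simp add: le_imp_less_Suc)
  then obtain c where c: "c \<in> frags_on V" and reduced: "\<forall>v\<in>V.
    0 \<le> poly_mapping.lookup (x - frag_extend g c) v \<and> poly_mapping.lookup (x - frag_extend g c) v < diag v"
    using ex_reduced_below_rank[OF x, of "Suc (Max (rk ` V))"] by blast
  have gc: "frag_extend g c \<in> int_span V g"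
    using c by (simp add: int_span_def)
  have "x - frag_extend g c \<in> frags_on V"
    using add_subgroup_diff[OF add_subgroup_frags_on x frag_extend_in_frags_on[OF g_frags_on c]] .
  then have r0: "x - frag_extend g c \<in> box V diag"
    using reduced by (simp add: box_def)
  show "\<exists>!r. r \<in> box V diag \<and> x - r \<in> int_span V g"
  proof (rule ex1I[of _ "x - frag_extend g c"])
    show "x - frag_extend g c \<in> box V diag \<and> x - (x - frag_extend g c) \<in> int_span V g"
      using r0 gc by simp
  next
    fix r assume r: "r \<in> box V diag \<and> x - r \<in> int_span V g"
    have "r - (x - frag_extend g c) = frag_extend g c - (x - r)"
      by simp
    also have "\<dots> \<in> int_span V g"
      using add_subgroup_diff[OF add_subgroup_int_span gc] r by blast
    finally have "r - (x - frag_extend g c) \<in> int_span V g" .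
    then show "r = x - frag_extend g c"
      using box_eq_if_diff_in_int_span r r0 by blast
  qed
qed

lemma add_index_int_span: "add_index (frags_on V) (int_span V g) = (\<Prod>v\<in>V. nat (diag v))"
  using card_transversal[OF add_subgroup_int_span transversal_box] card_box[OF finite_V] by simp

end

text \<open>The geometric sum form of \<open>theta\<close> is integral and needs no division by \<open>d - 2\<close>.\<close>

definition theta_int :: "nat \<Rightarrow> nat \<Rightarrow> int" where
  "theta_int d n = (\<Sum>i<n. (int d - 1) ^ i)"

lemma theta_int_0 [simp]: "theta_int d 0 = 0"
  by (simp add: theta_int_def)

lemma theta_int_1 [simp]: "theta_int d 1 = 1" "theta_int d (Suc 0) = 1"
  by (simp_all add: theta_int_def)

lemma theta_int_2: "theta_int d 2 = int d"
  by (simp add: theta_int_def numeral_2_eq_2)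

lemma theta_int_Suc: "theta_int d (Suc n) = theta_int d n + (int d - 1) ^ n"
  by (simp add: theta_int_def)

lemma theta_int_recurrence:
  "theta_int d (Suc (Suc n)) = int d * theta_int d (Suc n) - (int d - 1) * theta_int d n"
  by (simp add: theta_int_Suc algebra_simps)

lemma theta_int_ge_1: "d \<ge> 2 \<Longrightarrow> n \<ge> 1 \<Longrightarrow> theta_int d n \<ge> 1"
proof (induction n)
  case (Suc n)
  then show ?case
    by (cases "n = 0") (simp_all add: theta_int_Suc add_increasing2)
qed simp

lemma theta_eq_theta_int: "d \<ge> 3 \<Longrightarrow> theta d n = real_of_int (theta_int d n)"
proof -
  assume "d \<ge> 3"
  then have "(\<Sum>i<n. (real d - 1) ^ i) = ((real d - 1) ^ n - 1) / (real d - 1 - 1)"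
    by (intro geometric_sum) simp
  then show ?thesis
    using \<open>d \<ge> 3\<close> by (simp add: theta_def theta_int_def)
qed

locale regular_tree =
  fixes d h :: nat
  assumes d_ge_2: "d \<ge> 2" and h_ge_1: "h \<ge> 1"
begin

abbreviation V :: "nat list set" where
  "V \<equiv> tree_verts d h"

definition branching :: "nat \<Rightarrow> nat" where
  "branching n = (if n < h then (if n = 0 then d else d - 1) else 0)"

definition children :: "nat list \<Rightarrow> nat list set" where
  "children w = (\<lambda>i. w @ [i]) ` {..<branching (length w)}"

definition level :: "nat \<Rightarrow> nat list set" where
  "level n = {w \<in> V. length w = n}"

lemma finite_tree_verts: "finite V"
proof (rule finite_subset)
  show "V \<subseteq> {xs. set xs \<subseteq> {..<d} \<and> length xs \<le> h}"
    by (force simp: tree_verts_def in_set_conv_nth split: if_splits)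
  show "finite {xs. set xs \<subseteq> {..<d} \<and> length xs \<le> h}"
    by (rule finite_lists_length_le) simp
qed

lemma Nil_in_tree_verts [simp]: "[] \<in> V"
  by (simp add: tree_verts_def)

lemma length_le_height: "w \<in> V \<Longrightarrow> length w \<le> h"
  by (simp add: tree_verts_def)

lemma snoc_in_tree_verts_iff: "w @ [i] \<in> V \<longleftrightarrow> w \<in> V \<and> i < branching (length w)"
proof -
  have "w @ [i] \<in> V \<longleftrightarrow> length w < h \<and> (\<forall>j<length w. w ! j < (if j = 0 then d else d - 1))
      \<and> i < (if length w = 0 then d else d - 1)"
    unfolding tree_verts_def by (auto simp: nth_append less_Suc_eq)
  then show ?thesis
    by (auto simp: tree_verts_def branching_def)
qed

lemma prefix_in_tree_verts: "prefix u w \<Longrightarrow> w \<in> V \<Longrightarrow> u \<in> V"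
proof (induction w rule: rev_induct)
  case (snoc x w)
  then show ?case
    using snoc_in_tree_verts_iff by (auto simp: prefix_snoc)
qed simp

lemma butlast_in_tree_verts: "w \<in> V \<Longrightarrow> butlast w \<in> V"
  using prefix_in_tree_verts prefixeq_butlast by blast

lemma children_eq: "w \<in> V \<Longrightarrow> children w = {u \<in> V. \<exists>i. u = w @ [i]}"
  unfolding children_def using snoc_in_tree_verts_iff by auto

lemma card_children: "card (children w) = branching (length w)"
  unfolding children_def by (simp add: card_image inj_on_def)

lemma children_disjoint: "w \<noteq> w' \<Longrightarrow> children w \<inter> children w' = {}"
  unfolding children_def by auto

lemma nonroot_eq_Union_children: "V - {[]} = (\<Union>w\<in>V. children w)"
proof
  show "V - {[]} \<subseteq> (\<Union>w\<in>V. children w)"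
  proof
    fix u assume u: "u \<in> V - {[]}"
    then have "u = butlast u @ [last u]" "butlast u \<in> V"
      using butlast_in_tree_verts by auto
    then show "u \<in> (\<Union>w\<in>V. children w)"
      using u children_eq by blast
  qed
  show "(\<Union>w\<in>V. children w) \<subseteq> V - {[]}"
    using children_eq by auto
qed

lemma neighbours_eq:
  assumes "w \<in> V"
  shows "{u \<in> V. tree_adj u w} = (if w = [] then {} else {butlast w}) \<union> children w"
proof -
  have "tree_adj u w \<longleftrightarrow> (w \<noteq> [] \<and> u = butlast w) \<or> (\<exists>i. u = w @ [i])" for u
    unfolding tree_adj_def by (metis append_butlast_last_id butlast_snoc snoc_eq_iff_butlast)
  then show ?thesis
    using children_eq[OF assms] butlast_in_tree_verts[OF assms] by auto
qed

lemma sum_neighbours: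
  assumes "w \<in> V"
  shows "(\<Sum>u\<in>{u \<in> V. tree_adj u w}. f u) =
    (if w = [] then 0 else f (butlast w)) + (\<Sum>i<branching (length w). f (w @ [i]))"
proof -
  have "butlast w \<notin> children w"
    by (auto simp: children_def dest: arg_cong[of _ _ length])
  then have "(\<Sum>u\<in>{u \<in> V. tree_adj u w}. f u) =
      (\<Sum>u\<in>(if w = [] then {} else {butlast w}). f u) + (\<Sum>u\<in>children w. f u)"
    unfolding neighbours_eq[OF assms] by (intro sum.union_disjoint) (auto simp: children_def)
  moreover have "(\<Sum>u\<in>children w. f u) = (\<Sum>i<branching (length w). f (w @ [i]))"
    unfolding children_def by (subst sum.reindex) (auto simp: inj_on_def)
  ultimately show ?thesis
    by simp
qed

lemma level_Suc: "level (Suc n) = (\<Union>w\<in>level n. children w)"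
proof
  show "level (Suc n) \<subseteq> (\<Union>w\<in>level n. children w)"
  proof
    fix u assume u: "u \<in> level (Suc n)"
    then have "u \<noteq> []" "u \<in> V"
      by (auto simp: level_def)
    then have "butlast u \<in> V"
      using butlast_in_tree_verts by blast
    then have "u \<in> children (butlast u)"
      using children_eq \<open>u \<in> V\<close> append_butlast_last_id[OF \<open>u \<noteq> []\<close>, symmetric] by blast
    moreover have "butlast u \<in> level n"
      using u \<open>butlast u \<in> V\<close> by (simp add: level_def)
    ultimately show "u \<in> (\<Union>w\<in>level n. children w)"
      by blast
  qed
  show "(\<Union>w\<in>level n. children w) \<subseteq> level (Suc n)"
    using children_eq by (auto simp: level_def children_def)
qed

lemma card_level: "n \<le> h \<Longrightarrow> card (level n) = (if n = 0 then 1 else d * (d - 1) ^ (n - 1))"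
proof (induction n)
  case 0
  have "level 0 = {[]}"
    by (auto simp: level_def)
  then show ?case
    by simp
next
  case (Suc n)
  have "finite (level n)"
    using finite_tree_verts by (simp add: level_def)
  then have "card (level (Suc n)) = (\<Sum>w\<in>level n. card (children w))"
    unfolding level_Suc using children_disjoint
    by (intro card_UN_disjoint) (auto simp: children_def)
  also have "\<dots> = card (level n) * branching n"
    by (simp add: card_children level_def)
  finally show ?case
    using Suc by (cases n) (simp_all add: branching_def)
qed

definition delta_map :: "(nat list \<Rightarrow>\<^sub>0 int) \<Rightarrow> nat list \<Rightarrow>\<^sub>0 int" where
  "delta_map = frag_extend (delta_row d h)"

lemma lookup_delta_row:
  "poly_mapping.lookup (delta_row d h u) w =
    (if w = u then int d else 0) - (if w \<in> V \<and> tree_adj u w then 1 else 0)"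
  using finite_tree_verts by (simp add: delta_row_def lookup_minus lookup_sum sum.delta)

lemma delta_row_in_frags_on: "delta_row d h ` V \<subseteq> frags_on V"
  by (auto simp: in_keys_iff lookup_delta_row split: if_splits)

lemma delta_map_in_frags_on: "x \<in> frags_on V \<Longrightarrow> delta_map x \<in> frags_on V"
  unfolding delta_map_def by (rule frag_extend_in_frags_on[OF delta_row_in_frags_on])

lemma lookup_delta_map_eq_sum:
  "x \<in> frags_on V \<Longrightarrow> poly_mapping.lookup (delta_map x) w =
    (\<Sum>u\<in>V. poly_mapping.lookup x u * poly_mapping.lookup (delta_row d h u) w)"
  unfolding delta_map_def by (rule lookup_frag_extend[OF finite_tree_verts])

lemma lookup_delta_map:
  assumes "x \<in> frags_on V" "w \<in> V"
  shows "poly_mapping.lookup (delta_map x) w = int d * poly_mapping.lookup x w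
    - (if w = [] then 0 else poly_mapping.lookup x (butlast w))
    - (\<Sum>i<branching (length w). poly_mapping.lookup x (w @ [i]))"
proof -
  have "poly_mapping.lookup (delta_map x) w = (\<Sum>u\<in>V.
      (if u = w then int d * poly_mapping.lookup x u else 0) -
      (if tree_adj u w then poly_mapping.lookup x u else 0))"
    unfolding lookup_delta_map_eq_sum[OF assms(1)] using assms(2)
    by (intro sum.cong refl) (auto simp: lookup_delta_row tree_adj_def)
  also have "\<dots> = int d * poly_mapping.lookup x w - (\<Sum>u\<in>{u \<in> V. tree_adj u w}. poly_mapping.lookup x u)"
    using finite_tree_verts assms(2) by (simp add: sum_subtractf sum.inter_filter)
  finally show ?thesis
    by (simp add: sum_neighbours[OF assms(2)])
qed

lemma delta_map_symmetric:
  assumes "x \<in> frags_on V" "y \<in> frags_on V"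
  shows "(\<Sum>w\<in>V. poly_mapping.lookup (delta_map x) w * poly_mapping.lookup y w) =
    (\<Sum>w\<in>V. poly_mapping.lookup x w * poly_mapping.lookup (delta_map y) w)"
proof -
  have sym: "poly_mapping.lookup (delta_row d h u) w = poly_mapping.lookup (delta_row d h w) u"
    if "u \<in> V" "w \<in> V" for u w
    using that by (auto simp: lookup_delta_row tree_adj_def)
  show ?thesis
    unfolding lookup_delta_map_eq_sum[OF assms(1)] lookup_delta_map_eq_sum[OF assms(2)]
      sum_distrib_left sum_distrib_right
    by (subst sum.swap) (intro sum.cong refl, simp add: sym algebra_simps)
qed

definition theta_row :: "nat list \<Rightarrow> nat list \<Rightarrow>\<^sub>0 int" where
  "theta_row v = Abs_poly_mapping
    (\<lambda>w. if w \<in> V \<and> prefix v w then theta_int d (h + 1 - length w) else 0)"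

lemma lookup_theta_row:
  "poly_mapping.lookup (theta_row v) w =
    (if w \<in> V \<and> prefix v w then theta_int d (h + 1 - length w) else 0)"
proof -
  have "finite {w. (if w \<in> V \<and> prefix v w then theta_int d (h + 1 - length w) else 0) \<noteq> 0}"
    using finite_tree_verts by (rule finite_subset[rotated]) auto
  then show ?thesis
    by (simp add: theta_row_def)
qed

lemma theta_row_in_frags_on: "theta_row ` V \<subseteq> frags_on V"
  by (auto simp: in_keys_iff lookup_theta_row split: if_splits)

text \<open>At a vertex of depth \<open>n\<close> the recurrence of \<open>theta\<close> balances the
  value on the vertex against its parent and its \<open>branching n\<close> children.\<close>

lemma theta_int_balance:
  assumes "1 \<le> n" "n \<le> h"
  shows "int d * theta_int d (h + 1 - n) - int (branching n) * theta_int d (h - n) =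
    theta_int d (h + 2 - n)"
proof (cases "n < h")
  case True
  then have "h + 1 - n = Suc (h - n)" "h + 2 - n = Suc (Suc (h - n))"
    by auto
  then show ?thesis
    using True assms d_ge_2 by (simp add: branching_def theta_int_recurrence of_nat_diff)
next
  case False
  then show ?thesis
    using assms by (simp add: branching_def theta_int_2)
qed

lemma theta_int_depth_ge_1: "w \<in> V \<Longrightarrow> theta_int d (h + 1 - length w) \<ge> 1"
  using theta_int_ge_1[OF d_ge_2, of "h + 1 - length w"] length_le_height[of w] by simp

lemma sum_theta_row_children:
  assumes "w \<in> V" "prefix v w"
  shows "(\<Sum>i<branching (length w). poly_mapping.lookup (theta_row v) (w @ [i])) =
    int (branching (length w)) * theta_int d (h - length w)"
  using assms snoc_in_tree_verts_iff by (simp add: lookup_theta_row)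

lemma lookup_delta_theta_row_prefix:
  assumes v: "v \<in> V" and w: "w \<in> V" and "prefix v w"
  shows "poly_mapping.lookup (delta_map (theta_row v)) w =
    int d * theta_int d (h + 1 - length w)
    - (if w = [] then 0 else poly_mapping.lookup (theta_row v) (butlast w))
    - int (branching (length w)) * theta_int d (h - length w)"
proof -
  have "theta_row v \<in> frags_on V"
    using theta_row_in_frags_on v by blast
  show ?thesis
    unfolding lookup_delta_map[OF \<open>theta_row v \<in> frags_on V\<close> w]
      sum_theta_row_children[OF w \<open>prefix v w\<close>]
    using w \<open>prefix v w\<close> by (simp add: lookup_theta_row)
qed

lemma lookup_delta_theta_row_diag:
  assumes v: "v \<in> V"
  shows "poly_mapping.lookup (delta_map (theta_row v)) v =
    (if v = [] then int d * (int d - 1) ^ h else theta_int d (h + 2 - length v))"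
proof (cases "v = []")
  case True
  have "int d * theta_int d (h + 1) - int d * theta_int d h = int d * (int d - 1) ^ h"
    by (simp add: theta_int_Suc algebra_simps)
  then show ?thesis
    using True h_ge_1 lookup_delta_theta_row_prefix[OF v v] by (simp add: branching_def)
next
  case False
  then have "1 \<le> length v"
    by (cases v) auto
  moreover have "\<not> prefix v (butlast v)"
    using prefix_length_le[of v "butlast v"] False by (cases v) auto
  ultimately show ?thesis
    using False lookup_delta_theta_row_prefix[OF v v] theta_int_balance length_le_height[OF v]
    by (simp add: lookup_theta_row)
qed

lemma lookup_delta_theta_row_strict_prefix:
  assumes v: "v \<in> V" and w: "w \<in> V" and "prefix v w" "w \<noteq> v"
  shows "poly_mapping.lookup (delta_map (theta_row v)) w = 0"
proof -
  obtain s where "w = v @ s" "s \<noteq> []"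
    using \<open>prefix v w\<close> \<open>w \<noteq> v\<close> by (auto simp: prefix_def)
  then have "w \<noteq> []" "prefix v (butlast w)"
    by (auto simp: butlast_append)
  moreover have "1 \<le> length w" "h + 1 - (length w - 1) = h + 2 - length w"
    using \<open>w \<noteq> []\<close> length_le_height[OF w] by (cases w; simp)+
  ultimately show ?thesis
    using lookup_delta_theta_row_prefix[OF v w \<open>prefix v w\<close>] theta_int_balance[of "length w"]
      length_le_height[OF w] butlast_in_tree_verts[OF w]
    by (simp add: lookup_theta_row algebra_simps)
qed

lemma lookup_delta_theta_row_not_prefix:
  assumes v: "v \<in> V" and w: "w \<in> V" and "\<not> prefix v w"
  shows "poly_mapping.lookup (delta_map (theta_row v)) w =
    (if v \<noteq> [] \<and> w = butlast v then - theta_int d (h + 1 - length v) else 0)"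
proof -
  have "theta_row v \<in> frags_on V"
    using theta_row_in_frags_on v by blast
  have "\<not> prefix v (butlast w)"
    using \<open>\<not> prefix v w\<close> prefixeq_butlast prefix_order.trans by blast
  have children: "poly_mapping.lookup (theta_row v) (w @ [i]) =
      (if v = w @ [i] then theta_int d (h + 1 - length v) else 0)" for i
    using \<open>\<not> prefix v w\<close> v by (auto simp: lookup_theta_row prefix_snoc)
  have "poly_mapping.lookup (delta_map (theta_row v)) w =
      - (\<Sum>i<branching (length w). if v = w @ [i] then theta_int d (h + 1 - length v) else 0)"
    unfolding lookup_delta_map[OF \<open>theta_row v \<in> frags_on V\<close> w] children
    using \<open>\<not> prefix v w\<close> \<open>\<not> prefix v (butlast w)\<close> by (simp add: lookup_theta_row)
  also have "\<dots> = (if v \<noteq> [] \<and> w = butlast v then - theta_int d (h + 1 - length v) else 0)"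
  proof (cases "v \<noteq> [] \<and> w = butlast v")
    case True
    then obtain l where l: "v = w @ [l]"
      by (metis append_butlast_last_id)
    then have "l < branching (length w)"
      using v snoc_in_tree_verts_iff by blast
    moreover have "v = w @ [i] \<longleftrightarrow> i = l" for i
      using l by auto
    ultimately show ?thesis
      using True by simp
  next
    case False
    then have "v \<noteq> w @ [i]" for i
      by auto
    then show ?thesis
      using False by auto
  qed
  finally show ?thesis .
qed

lemma lookup_delta_theta_row_eq_0:
  assumes "v \<in> V" "w \<noteq> v" "w \<noteq> butlast v"
  shows "poly_mapping.lookup (delta_map (theta_row v)) w = 0"
proof (cases "w \<in> V")
  case True
  then show ?thesis
    using assms
    by (cases "prefix v w")
      (simp_all add: lookup_delta_theta_row_strict_prefix lookup_delta_theta_row_not_prefix)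
next
  case False
  moreover have "delta_map (theta_row v) \<in> frags_on V"
    using delta_map_in_frags_on theta_row_in_frags_on assms(1) by blast
  ultimately show ?thesis
    by (auto simp: in_keys_iff)
qed

lemma lookup_delta_theta_row_diag_pos:
  assumes "v \<in> V"
  shows "poly_mapping.lookup (delta_map (theta_row v)) v > 0"
proof -
  have "theta_int d (h + 2 - length v) \<ge> 1"
    using theta_int_ge_1[OF d_ge_2] length_le_height[OF assms] by simp
  then show ?thesis
    using d_ge_2 assms by (simp add: lookup_delta_theta_row_diag)
qed

text \<open>Pairing \<open>delta_map z = 0\<close> with \<open>theta_row v\<close> and using the symmetry of \<open>\<Delta>\<close>
  shows, by induction on the depth of \<open>v\<close>, that every coordinate of \<open>z\<close> vanishes.\<close>

lemma delta_map_eq_0D: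
  assumes z: "z \<in> frags_on V" and "delta_map z = 0"
  shows "z = 0"
proof -
  have "poly_mapping.lookup z v = 0" if "v \<in> V" for v
    using that
  proof (induction "length v" arbitrary: v rule: less_induct)
    case less
    have "0 = (\<Sum>w\<in>V. poly_mapping.lookup (delta_map z) w * poly_mapping.lookup (theta_row v) w)"
      using assms(2) by simp
    also have "\<dots> = (\<Sum>w\<in>V. poly_mapping.lookup z w * poly_mapping.lookup (delta_map (theta_row v)) w)"
      using theta_row_in_frags_on less.prems by (intro delta_map_symmetric[OF z]) blast
    also have "\<dots> = poly_mapping.lookup z v * poly_mapping.lookup (delta_map (theta_row v)) v"
    proof (rule sum_eq_single[OF finite_tree_verts less.prems])
      fix w assume "w \<in> V" "w \<noteq> v"
      show "poly_mapping.lookup z w * poly_mapping.lookup (delta_map (theta_row v)) w = 0"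
      proof (cases "w = butlast v")
        case True
        with \<open>w \<noteq> v\<close> have "length w < length v"
          by (cases v) auto
        then show ?thesis
          using less.hyps \<open>w \<in> V\<close> by simp
      qed (simp add: lookup_delta_theta_row_eq_0 less.prems \<open>w \<noteq> v\<close>)
    qed
    finally show ?case
      using lookup_delta_theta_row_diag_pos[OF less.prems] by simp
  qed
  moreover have "poly_mapping.lookup z v = 0" if "v \<notin> V" for v
    using z that by (auto simp: in_keys_iff)
  ultimately show "z = 0"
    by (metis lookup_zero poly_mapping_eqI)
qed

lemma inj_on_delta_map: "inj_on delta_map (frags_on V)"
proof (rule inj_onI)
  fix x y assume "x \<in> frags_on V" "y \<in> frags_on V" "delta_map x = delta_map y"
  then have "x - y \<in> frags_on V" "delta_map (x - y) = 0"
    using add_subgroup_diff[OF add_subgroup_frags_on] by (simp_all add: delta_map_def frag_extend_diff)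
  then have "x - y = 0"
    by (rule delta_map_eq_0D)
  then show "x = y"
    by simp
qed

lemma triangular_theta_rows: "triangular_family V theta_row length"
proof
  show "finite V" "theta_row ` V \<subseteq> frags_on V"
    by (rule finite_tree_verts, rule theta_row_in_frags_on)
next
  fix v assume "v \<in> V"
  then show "poly_mapping.lookup (theta_row v) v > 0"
    using theta_int_depth_ge_1[of v] by (simp add: lookup_theta_row)
next
  fix v w assume "poly_mapping.lookup (theta_row v) w \<noteq> 0" "w \<noteq> v"
  then show "length v < length w"
    by (auto simp: lookup_theta_row intro: prefix_length_less split: if_splits)
qed

lemma triangular_delta_theta_rows: "triangular_family V (delta_map \<circ> theta_row) (\<lambda>v. h - length v)"
proof
  show "finite V"
    by (rule finite_tree_verts)
  show "(delta_map \<circ> theta_row) ` V \<subseteq> frags_on V"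
    using delta_map_in_frags_on theta_row_in_frags_on by auto
next
  fix v assume "v \<in> V"
  then show "poly_mapping.lookup ((delta_map \<circ> theta_row) v) v > 0"
    using lookup_delta_theta_row_diag_pos by simp
next
  fix v w assume "v \<in> V" "poly_mapping.lookup ((delta_map \<circ> theta_row) v) w \<noteq> 0" "w \<noteq> v"
  then have "w = butlast v"
    using lookup_delta_theta_row_eq_0 by fastforce
  with \<open>w \<noteq> v\<close> have "length w < length v"
    by (cases v) auto
  then show "h - length v < h - length w"
    using length_le_height[OF \<open>v \<in> V\<close>] by simp
qed

lemma delta_lattice_eq: "delta_lattice d h = delta_map ` frags_on V"
  unfolding delta_lattice_def generate_free_Abelian_group[OF delta_row_in_frags_on]
  by (simp add: int_span_def delta_map_def)

lemma int_span_delta_theta_rows: "int_span V (delta_map \<circ> theta_row) = delta_map ` int_span V theta_row"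
  unfolding int_span_def delta_map_def by (simp add: image_image frag_extend_frag_extend)

lemma order_sandpile_group_mult:
  "order (sandpile_group d h) * (\<Prod>v\<in>V. nat (poly_mapping.lookup (theta_row v) v)) =
    (\<Prod>v\<in>V. nat (poly_mapping.lookup (delta_map (theta_row v)) v))"
proof -
  interpret U: triangular_family V theta_row length
    by (rule triangular_theta_rows)
  interpret MU: triangular_family V "delta_map \<circ> theta_row" "\<lambda>v. h - length v"
    by (rule triangular_delta_theta_rows)
  let ?F = "frags_on V" and ?U = "int_span V theta_row"
  have hom: "delta_map (x + y) = delta_map x + delta_map y" for x y
    by (simp add: delta_map_def frag_extend_add)
  have "?U \<subseteq> ?F"
    by (rule int_span_subset[OF theta_row_in_frags_on])
  have "order (sandpile_group d h) = add_index ?F (delta_map ` ?F)"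
    by (simp add: sandpile_group_def order_free_Abelian_group_Mod delta_lattice_eq)
  moreover have "add_index ?F (delta_map ` ?U) =
      add_index ?F (delta_map ` ?F) * add_index (delta_map ` ?F) (delta_map ` ?U)"
    using add_subgroup_image[OF hom] add_subgroup_frags_on add_subgroup_int_span \<open>?U \<subseteq> ?F\<close>
      delta_map_in_frags_on
    by (intro add_index_mult) auto
  moreover have "add_index (delta_map ` ?F) (delta_map ` ?U) = add_index ?F ?U"
    by (rule add_index_image[OF hom inj_on_delta_map add_subgroup_frags_on add_subgroup_int_span \<open>?U \<subseteq> ?F\<close>])
  ultimately show ?thesis
    using U.add_index_int_span MU.add_index_int_span by (simp add: int_span_delta_theta_rows)
qed

lemma prod_nonroot_by_parent: "(\<Prod>v\<in>V - {[]}. f v) = (\<Prod>w\<in>V. \<Prod>i<branching (length w). f (w @ [i]))"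
proof -
  have "(\<Prod>v\<in>V - {[]}. f v) = (\<Prod>w\<in>V. \<Prod>u\<in>children w. f u)"
    unfolding nonroot_eq_Union_children using finite_tree_verts children_disjoint
    by (intro prod.UNION_disjoint) (auto simp: children_def)
  also have "\<dots> = (\<Prod>w\<in>V. \<Prod>i<branching (length w). f (w @ [i]))"
    unfolding children_def by (intro prod.cong refl) (simp add: prod.reindex inj_on_def)
  finally show ?thesis .
qed

lemma prod_diag_delta_theta_rows:
  "(\<Prod>v\<in>V. poly_mapping.lookup (delta_map (theta_row v)) v) =
    int d * (int d - 1) ^ h * (\<Prod>w\<in>V. theta_int d (h + 1 - length w) ^ branching (length w))"
proof -
  have "(\<Prod>v\<in>V - {[]}. poly_mapping.lookup (delta_map (theta_row v)) v) =
      (\<Prod>v\<in>V - {[]}. theta_int d (h + 2 - length v))"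
    by (intro prod.cong refl) (simp add: lookup_delta_theta_row_diag)
  then show ?thesis
    using prod.remove[OF finite_tree_verts Nil_in_tree_verts,
        of "\<lambda>v. poly_mapping.lookup (delta_map (theta_row v)) v"]
    by (simp add: lookup_delta_theta_row_diag prod_nonroot_by_parent)
qed

lemma prod_theta_branching:
  "(\<Prod>w\<in>V. theta_int d (h + 1 - length w) ^ branching (length w)) =
    (\<Prod>w\<in>V. theta_int d (h + 1 - length w)) *
    (\<Prod>n = 0..h. theta_int d (h + 1 - n) ^ ((branching n - 1) * card (level n)))"
proof -
  have "theta_int d (h + 1 - length w) ^ branching (length w) =
      theta_int d (h + 1 - length w) * theta_int d (h + 1 - length w) ^ (branching (length w) - 1)"
    if "w \<in> V" for w
  proof (cases "branching (length w) = 0")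
    case True
    then have "length w = h"
      using length_le_height[OF that] d_ge_2 by (auto simp: branching_def split: if_splits)
    then show ?thesis
      by simp
  next
    case False
    then show ?thesis
      by (simp add: power_eq_if)
  qed
  then have "(\<Prod>w\<in>V. theta_int d (h + 1 - length w) ^ branching (length w)) =
      (\<Prod>w\<in>V. theta_int d (h + 1 - length w)) *
      (\<Prod>w\<in>V. theta_int d (h + 1 - length w) ^ (branching (length w) - 1))"
    by (simp add: prod.distrib[symmetric] cong: prod.cong)
  also have "(\<Prod>w\<in>V. theta_int d (h + 1 - length w) ^ (branching (length w) - 1)) =
      (\<Prod>n = 0..h. \<Prod>w\<in>level n. theta_int d (h + 1 - length w) ^ (branching (length w) - 1))"
    unfolding level_def using finite_tree_verts length_le_height by (intro prod.group[symmetric]) auto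
  also have "\<dots> = (\<Prod>n = 0..h. theta_int d (h + 1 - n) ^ ((branching n - 1) * card (level n)))"
    by (intro prod.cong refl) (simp add: level_def power_mult)
  finally show ?thesis .
qed

lemma prod_levels:
  "(\<Prod>n = 0..h. theta_int d (h + 1 - n) ^ ((branching n - 1) * card (level n))) =
    theta_int d (h + 1) ^ (d - 1) *
    (\<Prod>n = 1..h - 1. theta_int d (h + 1 - n) ^ ((d - 2) * d * (d - 1) ^ (n - 1)))"
  (is "prod ?f {0..h} = _")
proof -
  have "{0..h} = insert 0 (insert h {1..h - 1})" "0 \<notin> insert h {1..h - 1}" "h \<notin> {1..h - 1}"
    using h_ge_1 by auto
  then have "prod ?f {0..h} = ?f 0 * (?f h * prod ?f {1..h - 1})"
    by simp
  moreover have "?f 0 = theta_int d (h + 1) ^ (d - 1)" "?f h = 1"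
    using h_ge_1 card_level[of 0] by (simp_all add: branching_def)
  moreover have "prod ?f {1..h - 1} =
      (\<Prod>n = 1..h - 1. theta_int d (h + 1 - n) ^ ((d - 2) * d * (d - 1) ^ (n - 1)))"
  proof (rule prod.cong[OF refl])
    fix n assume "n \<in> {1..h - 1}"
    then have "1 \<le> n" "n < h"
      using h_ge_1 by auto
    then have "branching n - 1 = d - 2" "card (level n) = d * (d - 1) ^ (n - 1)"
      using card_level[of n] by (simp_all add: branching_def numeral_2_eq_2)
    then show "?f n = theta_int d (h + 1 - n) ^ ((d - 2) * d * (d - 1) ^ (n - 1))"
      by (simp add: mult.assoc)
  qed
  ultimately show ?thesis
    by simp
qed

lemma int_order_sandpile_group:
  "int (order (sandpile_group d h)) =
    int d * (int d - 1) ^ h * theta_int d (h + 1) ^ (d - 1) *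
    (\<Prod>n = 1..h - 1. theta_int d (h + 1 - n) ^ ((d - 2) * d * (d - 1) ^ (n - 1)))"
proof -
  let ?Q = "\<Prod>w\<in>V. theta_int d (h + 1 - length w)"
  have pos: "theta_int d (h + 1 - length w) > 0" if "w \<in> V" for w
    using theta_int_depth_ge_1[OF that] by simp
  have "int (\<Prod>v\<in>V. nat (poly_mapping.lookup (theta_row v) v)) = ?Q"
    unfolding of_nat_prod using pos by (intro prod.cong refl) (simp add: lookup_theta_row less_imp_le)
  moreover have "int (\<Prod>v\<in>V. nat (poly_mapping.lookup (delta_map (theta_row v)) v)) =
      (\<Prod>v\<in>V. poly_mapping.lookup (delta_map (theta_row v)) v)"
    unfolding of_nat_prod using lookup_delta_theta_row_diag_pos
    by (intro prod.cong refl) (simp add: less_imp_le)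
  ultimately have "int (order (sandpile_group d h)) * ?Q =
      (\<Prod>v\<in>V. poly_mapping.lookup (delta_map (theta_row v)) v)"
    using arg_cong[OF order_sandpile_group_mult, of int] by simp
  also have "\<dots> = int d * (int d - 1) ^ h * (?Q * (theta_int d (h + 1) ^ (d - 1) *
      (\<Prod>n = 1..h - 1. theta_int d (h + 1 - n) ^ ((d - 2) * d * (d - 1) ^ (n - 1)))))"
    by (simp only: prod_diag_delta_theta_rows prod_theta_branching prod_levels)
  also have "\<dots> = (int d * (int d - 1) ^ h * theta_int d (h + 1) ^ (d - 1) *
      (\<Prod>n = 1..h - 1. theta_int d (h + 1 - n) ^ ((d - 2) * d * (d - 1) ^ (n - 1)))) * ?Q"
    by (simp only: mult_ac)
  moreover have "?Q > 0"
    using pos by (intro prod_pos) simp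
  ultimately show ?thesis
    by simp
qed

end

theorem theorem2p5:
  fixes d h :: nat
  assumes "d \<ge> 3" and "h \<ge> 1"
  shows "real (order (sandpile_group d h)) =
    real d * (real d - 1) ^ h * (theta d (h + 1)) ^ (d - 1) *
    (\<Prod>n = 1..h - 1. (theta d (h + 1 - n)) ^ ((d - 2) * d * (d - 1) ^ (n - 1)))"
proof -
  interpret regular_tree d h
    using assms by unfold_locales auto
  have "real (order (sandpile_group d h)) = real_of_int (int (order (sandpile_group d h)))"
    by simp
  also have "\<dots> = real d * (real d - 1) ^ h * (theta d (h + 1)) ^ (d - 1) *
      (\<Prod>n = 1..h - 1. (theta d (h + 1 - n)) ^ ((d - 2) * d * (d - 1) ^ (n - 1)))"
    unfolding int_order_sandpile_group using assms(1)
    by (simp add: theta_eq_theta_int of_int_prod)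
  finally show ?thesis .
qed

end
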